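(* Let $U:\mathbb R^d\to\mathbb R$ be twice differentiable with $\nabla^2U(x)\succ mI_d$ for all $x$ (for some $m>0$), and let $x^*$ satisfy $\nabla U(x^* )=0$. If $x\sim\pi$ with density proportional to $e^{-U(x)}$, then \[\big(\mathbb E\|x-x^*\|^4\big)^{1/4}\le3^{1/4}\sqrt{\frac dm}\quad\text{and}\quad\big(\mathbb E\|x-x^*\|^8\big)^{1/8}\le105^{1/8}\sqrt{\frac dm}.\] *)

theory Defs
  imports "HOL-Analysis.Analysis"
begin

definition gibbs_expectation :: "('a::euclidean_space \<Rightarrow> real) \<Rightarrow> ('a \<Rightarrow> real) \<Rightarrow> real" where
  "gibbs_expectation U g =
     (\<integral>x. g x * exp (- U x) \<partial>lborel) / (\<integral>x. exp (- U x) \<partial>lborel)"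

definition loewner_gt_scaled_id :: "('a::real_inner \<Rightarrow> 'a) \<Rightarrow> real \<Rightarrow> bool" where
  "loewner_gt_scaled_id A m \<longleftrightarrow> (\<forall>v. v \<noteq> 0 \<longrightarrow> inner v (A v - m *\<^sub>R v) > 0)"

end

theory Submission
  imports Defs "HOL-Real_Asymp.Real_Asymp"
begin

(*
  Write M_j for the integral of |x - x0|^j exp (-U x) over R^d, where x0 is the critical point.
  Along every ray from x0 the Hessian bound gives U (x0 + s (x - x0)) >= U x + m (s - 1) |x - x0|^2
  for s >= 1. The dilation x -> x0 + (1 + t) (x - x0) rescales M_j by (1 + t)^-(d + j), so comparing
  exp (-U) with its dilate shows that the integral of |x - x0|^j exp (-U x) (1 - exp (-m t |x - x0|^2))
  is at most (1 - (1 + t)^-(d + j)) M_j <= (d + j) t M_j. Dividing by t and letting t -> 0 (Fatou)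
  gives m M_(j+2) <= (d + j) M_j, hence M_(2k) <= 1 * 3 * ... * (2k - 1) * (d / m)^k * M_0;
  k = 2 and k = 4 give the constants 3 and 105.
*)

lemma growth_from_second_derivative_bound:
  fixes h h' h'' :: "real \<Rightarrow> real"
  assumes h: "\<And>t. (h has_real_derivative h' t) (at t)"
    and h': "\<And>t. (h' has_real_derivative h'' t) (at t)"
    and h''_ge: "\<And>t. c \<le> h'' t" and "h' 0 = 0" and "0 \<le> c" and "1 \<le> s"
  shows "h 1 + c * (s - 1) \<le> h s"
proof -
  have h'_ge: "c * t \<le> h' t" if "0 \<le> t" for t
  proof -
    have "h' 0 - c * 0 \<le> h' t - c * t"
      by (rule deriv_nonneg_imp_mono[of 0 t _ "\<lambda>u. h'' u - c"])
        (auto intro!: derivative_eq_intros h' simp: h''_ge that)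
    then show ?thesis using \<open>h' 0 = 0\<close> by simp
  qed
  have "h 1 - c * 1 \<le> h s - c * s"
  proof (rule deriv_nonneg_imp_mono[of 1 s _ "\<lambda>u. h' u - c"])
    show "0 \<le> h' u - c" if "u \<in> {1..s}" for u
      using h'_ge[of u] mult_left_mono[of 1 u c] that \<open>0 \<le> c\<close> by auto
  qed (auto intro!: derivative_eq_intros h' simp: h \<open>1 \<le> s\<close>)
  then show ?thesis by (simp add: algebra_simps)
qed

lemma loewner_gt_scaled_id_quadratic_form_ge:
  assumes "loewner_gt_scaled_id A m"
  shows "m * (norm v)\<^sup>2 \<le> inner v (A v)"
  using assms unfolding loewner_gt_scaled_id_def
  by (cases "v = 0") (auto simp: inner_diff_right power2_norm_eq_inner dest!: spec[of _ v])

definition radial_quadratic_growth :: "('a::real_normed_vector \<Rightarrow> real) \<Rightarrow> 'a \<Rightarrow> real \<Rightarrow> bool" where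
  "radial_quadratic_growth U x0 m \<longleftrightarrow>
    (\<forall>x s. 1 \<le> s \<longrightarrow> U x + m * (s - 1) * (norm (x - x0))\<^sup>2 \<le> U (x0 + s *\<^sub>R (x - x0)))"

lemma strongly_convex_radial_quadratic_growth:
  fixes U :: "'a::euclidean_space \<Rightarrow> real"
  assumes grad: "\<And>x. (U has_derivative (\<lambda>h. inner (gradU x) h)) (at x)"
    and hess: "\<And>x. (gradU has_derivative hessU x) (at x)"
    and strong: "\<And>x. loewner_gt_scaled_id (hessU x) m"
    and crit: "gradU x0 = 0" and "0 \<le> m"
  shows "radial_quadratic_growth U x0 m"
  unfolding radial_quadratic_growth_def
proof (intro allI impI)
  fix x and s :: real
  assume "1 \<le> s"
  define y where "y = x - x0"
  define line where "line t = x0 + t *\<^sub>R y" for t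
  have line: "(line has_derivative (\<lambda>t. t *\<^sub>R y)) (at t)" for t
    unfolding line_def by (auto intro!: derivative_eq_intros)
  have "U (line 1) + m * (norm y)\<^sup>2 * (s - 1) \<le> U (line s)"
  proof (rule growth_from_second_derivative_bound)
    show "((\<lambda>t. U (line t)) has_real_derivative inner (gradU (line t)) y) (at t)" for t
      by (rule has_derivative_imp_has_field_derivative[OF has_derivative_compose[OF line grad]])
        (simp add: mult.commute)
    have hess_linear: "linear (hessU z)" for z
      using hess has_derivative_linear by blast
    show "((\<lambda>t. inner (gradU (line t)) y) has_real_derivative inner (hessU (line t) y) y) (at t)" for t
      by (rule has_derivative_imp_has_field_derivative
          [OF has_derivative_inner_left[OF has_derivative_compose[OF line hess]]])
        (simp add: linear_scale[OF hess_linear])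
    show "m * (norm y)\<^sup>2 \<le> inner (hessU (line t) y) y" for t
      using loewner_gt_scaled_id_quadratic_form_ge[OF strong] by (simp add: inner_commute)
  qed (use crit \<open>0 \<le> m\<close> \<open>1 \<le> s\<close> in \<open>auto simp: line_def\<close>)
  then show "U x + m * (s - 1) * (norm (x - x0))\<^sup>2 \<le> U (x0 + s *\<^sub>R (x - x0))"
    by (simp add: line_def y_def algebra_simps)
qed

lemma one_minus_inverse_power_le:
  fixes t :: real
  assumes "0 \<le> t"
  shows "1 - inverse ((1 + t) ^ n) \<le> real n * t"
proof -
  have "1 + real n * (- t / (1 + t)) \<le> (1 + - t / (1 + t)) ^ n"
    using assms by (intro Bernoulli_inequality) (simp add: field_simps)
  also have "1 + - t / (1 + t) = inverse (1 + t)"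
    using assms by (simp add: field_simps)
  finally have "1 - inverse ((1 + t) ^ n) \<le> real n * (t / (1 + t))"
    by (simp add: power_inverse)
  also have "\<dots> \<le> real n * t"
    using assms by (intro mult_left_mono) (auto simp: divide_le_eq algebra_simps)
  finally show ?thesis .
qed

lemma tendsto_scaled_one_minus_exp:
  fixes c :: real
  shows "(\<lambda>k::nat. (real k + 1) * (1 - exp (- c / (real k + 1)))) \<longlonglongrightarrow> c"
  by real_asymp

lemma nn_integral_lborel_affine:
  fixes f :: "'a::euclidean_space \<Rightarrow> ennreal"
  assumes [measurable]: "f \<in> borel_measurable borel" and c: "c \<noteq> 0"
  shows "(\<integral>\<^sup>+x. f x \<partial>lborel) = ennreal (\<bar>c\<bar> ^ DIM('a)) * (\<integral>\<^sup>+x. f (t + c *\<^sub>R x) \<partial>lborel)"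
  by (subst lborel_affine[OF c, of t])
    (simp add: nn_integral_density nn_integral_distr nn_integral_cmult)

definition gibbs_moment :: "('a::euclidean_space \<Rightarrow> real) \<Rightarrow> 'a \<Rightarrow> nat \<Rightarrow> ennreal" where
  "gibbs_moment U x0 j = (\<integral>\<^sup>+x. ennreal (norm (x - x0) ^ j * exp (- U x)) \<partial>lborel)"

lemma gibbs_moment_dilation:
  fixes U :: "'a::euclidean_space \<Rightarrow> real"
  assumes [measurable]: "U \<in> borel_measurable borel" and "0 < s"
  shows "(\<integral>\<^sup>+x. ennreal (norm (x - x0) ^ j * exp (- U (x0 + s *\<^sub>R (x - x0)))) \<partial>lborel)
    = ennreal (inverse (s ^ (DIM('a) + j))) * gibbs_moment U x0 j"
proof -
  let ?D = "\<integral>\<^sup>+x. ennreal (norm (x - x0) ^ j * exp (- U (x0 + s *\<^sub>R (x - x0)))) \<partial>lborel"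
  have affine: "(1 - s) *\<^sub>R x0 + s *\<^sub>R x = x0 + s *\<^sub>R (x - x0)" for x
    by (simp add: algebra_simps)
  have "gibbs_moment U x0 j = ennreal (s ^ DIM('a))
      * (\<integral>\<^sup>+x. ennreal (norm ((1 - s) *\<^sub>R x0 + s *\<^sub>R x - x0) ^ j
          * exp (- U ((1 - s) *\<^sub>R x0 + s *\<^sub>R x))) \<partial>lborel)"
    unfolding gibbs_moment_def using \<open>0 < s\<close>
    by (subst nn_integral_lborel_affine[where c = s and t = "(1 - s) *\<^sub>R x0"]) auto
  also have "\<dots> = ennreal (s ^ DIM('a)) * (\<integral>\<^sup>+x. ennreal (s ^ j) * ennreal (norm (x - x0) ^ j
      * exp (- U (x0 + s *\<^sub>R (x - x0)))) \<partial>lborel)"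
    using \<open>0 < s\<close> by (intro arg_cong2[where f = "(*)"] nn_integral_cong refl)
      (simp add: affine power_mult_distrib ennreal_mult[symmetric] mult.assoc)
  also have "\<dots> = ennreal (s ^ (DIM('a) + j)) * ?D"
    using \<open>0 < s\<close> by (simp add: nn_integral_cmult power_add ennreal_mult mult.assoc)
  finally have "gibbs_moment U x0 j = ennreal (s ^ (DIM('a) + j)) * ?D" .
  moreover have "ennreal (inverse (s ^ (DIM('a) + j))) * ennreal (s ^ (DIM('a) + j)) = 1"
    using \<open>0 < s\<close> by (simp flip: ennreal_mult)
  ultimately show ?thesis by (simp add: mult.assoc[symmetric])
qed

lemma gibbs_moment_gap_add_dilation_le:
  fixes U :: "'a::euclidean_space \<Rightarrow> real"
  assumes U_meas [measurable]: "U \<in> borel_measurable borel" and "0 \<le> m" and "0 < t"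
    and growth: "radial_quadratic_growth U x0 m"
  shows "(\<integral>\<^sup>+x. ennreal (norm (x - x0) ^ j * exp (- U x) * (1 - exp (- m * t * (norm (x - x0))\<^sup>2)))
      \<partial>lborel)
      + ennreal (inverse ((1 + t) ^ (DIM('a) + j))) * gibbs_moment U x0 j
    \<le> gibbs_moment U x0 j"
proof -
  define gap where "gap x = norm (x - x0) ^ j * exp (- U x) * (1 - exp (- m * t * (norm (x - x0))\<^sup>2))" for x
  define dilated where "dilated x = norm (x - x0) ^ j * exp (- U (x0 + (1 + t) *\<^sub>R (x - x0)))" for x
  have pointwise: "gap x + dilated x \<le> norm (x - x0) ^ j * exp (- U x)" for x
  proof -
    have "U x + m * t * (norm (x - x0))\<^sup>2 \<le> U (x0 + (1 + t) *\<^sub>R (x - x0))"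
      using growth[unfolded radial_quadratic_growth_def, rule_format, of "1 + t" x] \<open>0 < t\<close>
      by simp
    then have "exp (- U (x0 + (1 + t) *\<^sub>R (x - x0))) \<le> exp (- U x) * exp (- m * t * (norm (x - x0))\<^sup>2)"
      by (simp flip: exp_add)
    then have "dilated x \<le> norm (x - x0) ^ j * exp (- U x) * exp (- m * t * (norm (x - x0))\<^sup>2)"
      unfolding dilated_def by (simp add: mult.assoc mult_left_mono)
    then show ?thesis
      by (simp add: gap_def algebra_simps)
  qed
  have gap_nonneg: "0 \<le> gap x" for x
    using \<open>0 \<le> m\<close> \<open>0 < t\<close> by (simp add: gap_def)
  have "(\<integral>\<^sup>+x. ennreal (gap x) \<partial>lborel)
        + ennreal (inverse ((1 + t) ^ (DIM('a) + j))) * gibbs_moment U x0 j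
      = (\<integral>\<^sup>+x. ennreal (gap x) \<partial>lborel) + (\<integral>\<^sup>+x. ennreal (dilated x) \<partial>lborel)"
    using gibbs_moment_dilation[OF U_meas, of "1 + t" x0 j] \<open>0 < t\<close>
    by (simp add: dilated_def)
  also have "\<dots> = (\<integral>\<^sup>+x. ennreal (gap x) + ennreal (dilated x) \<partial>lborel)"
    unfolding gap_def dilated_def by (rule nn_integral_add[symmetric]) auto
  also have "\<dots> \<le> gibbs_moment U x0 j"
    unfolding gibbs_moment_def using pointwise gap_nonneg
    by (intro nn_integral_mono) (simp add: dilated_def flip: ennreal_plus)
  finally show ?thesis
    by (simp only: gap_def)
qed

lemma gibbs_moment_gap_le:
  fixes U :: "'a::euclidean_space \<Rightarrow> real"
  assumes U_meas: "U \<in> borel_measurable borel" and "0 \<le> m" and "0 < t"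
    and growth: "radial_quadratic_growth U x0 m"
  shows "(\<integral>\<^sup>+x. ennreal (norm (x - x0) ^ j * exp (- U x) * (1 - exp (- m * t * (norm (x - x0))\<^sup>2)))
      \<partial>lborel)
    \<le> ennreal (real (DIM('a) + j) * t) * gibbs_moment U x0 j"
    (is "?G \<le> ennreal (real ?n * t) * ?M")
proof (cases "?M = \<infinity>")
  case True
  have "0 < real ?n * t"
    using \<open>0 < t\<close> DIM_positive[where 'a = 'a] by (intro mult_pos_pos) (simp only: of_nat_0_less_iff, linarith)
  then have nonzero: "ennreal (real ?n * t) \<noteq> 0"
    by (simp only: ennreal_eq_0_iff not_le)
  show ?thesis
    by (simp only: True infinity_ennreal_def ennreal_mult_top nonzero if_False top_greatest)
next
  case False
  then obtain M where M: "?M = ennreal M" "0 \<le> M"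
    by (cases ?M) auto
  have G_le: "?G + ennreal (inverse ((1 + t) ^ ?n) * M) \<le> ennreal M"
    using gibbs_moment_gap_add_dilation_le[OF U_meas \<open>0 \<le> m\<close> \<open>0 < t\<close> growth, of j] M \<open>0 < t\<close>
    by (simp add: ennreal_mult)
  then obtain G where G: "?G = ennreal G" "0 \<le> G"
    by (cases ?G) (auto simp: top_add top_unique)
  have "G + inverse ((1 + t) ^ ?n) * M \<le> M"
    using G_le G M \<open>0 < t\<close> by (simp flip: ennreal_plus)
  then have "G \<le> (1 - inverse ((1 + t) ^ ?n)) * M"
    by (simp add: algebra_simps)
  also have "\<dots> \<le> real ?n * t * M"
    using one_minus_inverse_power_le[of t ?n] \<open>0 < t\<close> M by (intro mult_right_mono) auto
  finally have "ennreal G \<le> ennreal (real ?n * t * M)"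
    by (rule ennreal_leI)
  also have "\<dots> = ennreal (real ?n * t) * ?M"
    using M \<open>0 < t\<close> by (simp add: ennreal_mult)
  finally show ?thesis
    using G by simp
qed

lemma gibbs_moment_step:
  fixes U :: "'a::euclidean_space \<Rightarrow> real"
  assumes U_meas [measurable]: "U \<in> borel_measurable borel" and "0 \<le> m"
    and growth: "radial_quadratic_growth U x0 m"
  shows "ennreal m * gibbs_moment U x0 (j + 2) \<le> ennreal (real (DIM('a) + j)) * gibbs_moment U x0 j"
proof -
  let ?n = "DIM('a) + j"
  define gap where "gap t x = norm (x - x0) ^ j * exp (- U x) * (1 - exp (- m * t * (norm (x - x0))\<^sup>2))"
    for t x
  define u where "u k x = ennreal (real k + 1) * ennreal (gap (1 / (real k + 1)) x)" for k x
  have "(\<lambda>k. (real k + 1) * gap (1 / (real k + 1)) x) \<longlonglongrightarrow> m * (norm (x - x0) ^ (j + 2) * exp (- U x))"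
    for x
  proof -
    have "(\<lambda>k. norm (x - x0) ^ j * exp (- U x)
        * ((real k + 1) * (1 - exp (- (m * (norm (x - x0))\<^sup>2) / (real k + 1)))))
      \<longlonglongrightarrow> norm (x - x0) ^ j * exp (- U x) * (m * (norm (x - x0))\<^sup>2)"
      by (intro tendsto_mult_left tendsto_scaled_one_minus_exp)
    then show ?thesis
      by (simp add: gap_def power_add power2_eq_square field_simps)
  qed
  then have u_lim: "(\<lambda>k. u k x) \<longlonglongrightarrow> ennreal (m * (norm (x - x0) ^ (j + 2) * exp (- U x)))" for x
    using \<open>0 \<le> m\<close> unfolding u_def by (subst ennreal_mult[symmetric]) (auto simp: gap_def intro: tendsto_ennrealI)
  have u_bound: "(\<integral>\<^sup>+x. u k x \<partial>lborel) \<le> ennreal (real ?n) * gibbs_moment U x0 j" for k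
  proof -
    have "(\<integral>\<^sup>+x. u k x \<partial>lborel)
        = ennreal (real k + 1) * (\<integral>\<^sup>+x. ennreal (gap (1 / (real k + 1)) x) \<partial>lborel)"
      unfolding u_def gap_def by (rule nn_integral_cmult) simp
    also have "\<dots> \<le> ennreal (real k + 1) * (ennreal (real ?n * (1 / (real k + 1))) * gibbs_moment U x0 j)"
      unfolding gap_def by (intro mult_left_mono gibbs_moment_gap_le[OF U_meas \<open>0 \<le> m\<close> _ growth]) auto
    also have "\<dots> = ennreal (real ?n) * gibbs_moment U x0 j"
      unfolding mult.assoc[symmetric] by (subst ennreal_mult[symmetric]) auto
    finally show ?thesis .
  qed
  have "ennreal m * gibbs_moment U x0 (j + 2)
      = (\<integral>\<^sup>+x. ennreal (m * (norm (x - x0) ^ (j + 2) * exp (- U x))) \<partial>lborel)"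
    unfolding gibbs_moment_def using \<open>0 \<le> m\<close>
    by (subst nn_integral_cmult[symmetric]) (auto simp: ennreal_mult)
  also have "\<dots> = (\<integral>\<^sup>+x. liminf (\<lambda>k. u k x) \<partial>lborel)"
    by (intro nn_integral_cong lim_imp_Liminf[symmetric] trivial_limit_sequentially u_lim)
  also have "\<dots> \<le> liminf (\<lambda>k. \<integral>\<^sup>+x. u k x \<partial>lborel)"
    unfolding u_def gap_def by (rule nn_integral_liminf) simp
  also have "\<dots> \<le> ennreal (real ?n) * gibbs_moment U x0 j"
    using u_bound by (intro Liminf_le) auto
  finally show ?thesis .
qed

lemma ennreal_le_divide_of_mult_le:
  assumes "ennreal m * a \<le> ennreal c * b" and "0 < m" and "0 \<le> c"
  shows "a \<le> ennreal (c / m) * b"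
proof -
  have "a = ennreal (1 / m) * (ennreal m * a)"
    using \<open>0 < m\<close> by (simp add: mult.assoc[symmetric] flip: ennreal_mult)
  also have "\<dots> \<le> ennreal (1 / m) * (ennreal c * b)"
    using assms(1) by (rule mult_left_mono) simp
  also have "\<dots> = ennreal (c / m) * b"
    using assms(2,3) by (simp add: mult.assoc[symmetric] flip: ennreal_mult)
  finally show ?thesis .
qed

lemma gibbs_moment_even_le:
  fixes U :: "'a::euclidean_space \<Rightarrow> real"
  assumes U_meas: "U \<in> borel_measurable borel" and "0 < m"
    and growth: "radial_quadratic_growth U x0 m"
  shows "gibbs_moment U x0 (2 * k)
    \<le> ennreal ((\<Prod>i<k. real (2 * i + 1)) * (real DIM('a) / m) ^ k) * gibbs_moment U x0 0"
proof (induction k)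
  case 0
  then show ?case by simp
next
  case (Suc k)
  define C where "C = (\<Prod>i<k. real (2 * i + 1)) * (real DIM('a) / m) ^ k"
  have C_nonneg: "0 \<le> C"
    using \<open>0 < m\<close> by (simp add: C_def prod_nonneg)
  have "DIM('a) + 2 * k \<le> (2 * k + 1) * DIM('a)"
    using DIM_positive[where 'a = 'a] by (simp add: algebra_simps)
  then have dim_le: "real (DIM('a) + 2 * k) \<le> real (2 * k + 1) * real DIM('a)"
    by (simp only: of_nat_mult[symmetric] of_nat_le_iff)
  have "ennreal m * gibbs_moment U x0 (2 * k + 2)
      \<le> ennreal (real (DIM('a) + 2 * k)) * gibbs_moment U x0 (2 * k)"
    using \<open>0 < m\<close> by (intro gibbs_moment_step[OF U_meas _ growth]) simp
  also have "\<dots> \<le> ennreal (real (2 * k + 1) * real DIM('a)) * (ennreal C * gibbs_moment U x0 0)"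
    using Suc.IH dim_le unfolding C_def by (intro mult_mono ennreal_leI) auto
  also have "\<dots> = ennreal (real (2 * k + 1) * real DIM('a) * C) * gibbs_moment U x0 0"
    using C_nonneg by (simp add: ennreal_mult mult.assoc)
  finally have "gibbs_moment U x0 (2 * k + 2)
      \<le> ennreal (real (2 * k + 1) * real DIM('a) * C / m) * gibbs_moment U x0 0"
    using \<open>0 < m\<close> C_nonneg by (intro ennreal_le_divide_of_mult_le) auto
  moreover have "real (2 * k + 1) * real DIM('a) * C / m
      = (\<Prod>i<Suc k. real (2 * i + 1)) * (real DIM('a) / m) ^ Suc k"
    by (simp add: C_def field_simps)
  ultimately show ?case
    by (metis mult_Suc_right add.commute)
qed

lemma gibbs_expectation_norm_power:
  assumes [measurable]: "U \<in> borel_measurable borel"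
  shows "gibbs_expectation U (\<lambda>x. norm (x - x0) ^ j)
    = enn2real (gibbs_moment U x0 j) / enn2real (gibbs_moment U x0 0)"
  unfolding gibbs_expectation_def gibbs_moment_def
  by (subst (1 2) integral_eq_nn_integral) auto

lemma gibbs_expectation_even_moment_le:
  fixes U :: "'a::euclidean_space \<Rightarrow> real"
  assumes U_meas: "U \<in> borel_measurable borel" and "0 < m"
    and growth: "radial_quadratic_growth U x0 m"
  shows "gibbs_expectation U (\<lambda>x. norm (x - x0) ^ (2 * k))
    \<le> (\<Prod>i<k. real (2 * i + 1)) * (real DIM('a) / m) ^ k"
    (is "_ \<le> ?C")
proof -
  have C_nonneg: "0 \<le> ?C"
    using \<open>0 < m\<close> by (simp add: prod_nonneg)
  show ?thesis
  proof (cases "gibbs_moment U x0 0 = \<infinity>")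
    case True
    \<comment> \<open>exp (-U) is not integrable: the normalising integral and hence the expectation are 0\<close>
    then show ?thesis
      using C_nonneg by (simp add: gibbs_expectation_norm_power[OF U_meas])
  next
    case False
    then obtain M0 where M0: "gibbs_moment U x0 0 = ennreal M0" "0 \<le> M0"
      by (cases "gibbs_moment U x0 0") auto
    have "gibbs_moment U x0 (2 * k) \<le> ennreal (?C * M0)"
      using gibbs_moment_even_le[OF U_meas \<open>0 < m\<close> growth, of k] M0 C_nonneg by (simp add: ennreal_mult)
    then have "enn2real (gibbs_moment U x0 (2 * k)) \<le> ?C * M0"
      using C_nonneg M0 by (simp add: enn2real_leI)
    then show ?thesis
      using M0 C_nonneg
      by (cases "M0 = 0") (simp_all add: gibbs_expectation_norm_power[OF U_meas] divide_le_eq)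
  qed
qed

lemma powr_inverse_even_le_sqrt:
  fixes x c a :: real
  assumes "0 \<le> x" "x \<le> c * a ^ k" "0 < a" "0 \<le> c" "0 < k"
  shows "x powr (1 / (2 * real k)) \<le> c powr (1 / (2 * real k)) * sqrt a"
proof -
  have "x powr (1 / (2 * real k)) \<le> (c * a ^ k) powr (1 / (2 * real k))"
    using assms by (intro powr_mono2) auto
  also have "\<dots> = c powr (1 / (2 * real k)) * (a powr real k) powr (1 / (2 * real k))"
    using assms by (simp add: powr_mult powr_realpow)
  also have "(a powr real k) powr (1 / (2 * real k)) = sqrt a"
    using assms by (simp add: powr_powr powr_half_sqrt)
  finally show ?thesis .
qed

theorem gibbs_expectation_even_moment_root_le:
  fixes U :: "'a::euclidean_space \<Rightarrow> real"
  assumes "0 < m"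
    and grad: "\<And>x. (U has_derivative (\<lambda>h. inner (gradU x) h)) (at x)"
    and hess: "\<And>x. (gradU has_derivative hessU x) (at x)"
    and strong: "\<And>x. loewner_gt_scaled_id (hessU x) m"
    and crit: "gradU x0 = 0" and "0 < k"
  shows "gibbs_expectation U (\<lambda>x. norm (x - x0) ^ (2 * k)) powr (1 / (2 * real k))
    \<le> (\<Prod>i<k. real (2 * i + 1)) powr (1 / (2 * real k)) * sqrt (real DIM('a) / m)"
proof (rule powr_inverse_even_le_sqrt)
  have "continuous_on UNIV U"
    using grad has_derivative_continuous continuous_at_imp_continuous_on by blast
  then have U_meas: "U \<in> borel_measurable borel"
    by (rule borel_measurable_continuous_onI)
  show "gibbs_expectation U (\<lambda>x. norm (x - x0) ^ (2 * k))
      \<le> (\<Prod>i<k. real (2 * i + 1)) * (real DIM('a) / m) ^ k"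
    using strongly_convex_radial_quadratic_growth[OF grad hess strong crit] \<open>0 < m\<close>
    by (intro gibbs_expectation_even_moment_le[OF U_meas \<open>0 < m\<close>]) auto
  show "0 \<le> gibbs_expectation U (\<lambda>x. norm (x - x0) ^ (2 * k))"
    by (simp add: gibbs_expectation_norm_power[OF U_meas])
qed (use \<open>0 < m\<close> \<open>0 < k\<close> in \<open>auto intro: prod_nonneg\<close>)

theorem lemma12:
  fixes U :: "'a::euclidean_space \<Rightarrow> real"
    and gradU :: "'a \<Rightarrow> 'a"
    and hessU :: "'a \<Rightarrow> 'a \<Rightarrow> 'a"
    and m :: real and xstar :: 'a
  assumes m_pos: "m > 0"
    and grad: "\<And>x. (U has_derivative (\<lambda>h. inner (gradU x) h)) (at x)"
    and hess: "\<And>x. (gradU has_derivative hessU x) (at x)"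
    and strong: "\<And>x. loewner_gt_scaled_id (hessU x) m"
    and crit: "gradU xstar = 0"
  shows "gibbs_expectation U (\<lambda>x. norm (x - xstar) ^ 4) powr (1/4)
           \<le> 3 powr (1/4) * sqrt (real DIM('a) / m) \<and>
         gibbs_expectation U (\<lambda>x. norm (x - xstar) ^ 8) powr (1/8)
           \<le> 105 powr (1/8) * sqrt (real DIM('a) / m)"
proof -
  have "(\<Prod>i<2. real (2 * i + 1)) = 3" and "(\<Prod>i<4. real (2 * i + 1)) = 105"
    by (simp_all add: eval_nat_numeral)
  then show ?thesis
    using gibbs_expectation_even_moment_root_le[OF m_pos grad hess strong crit, of 2]
      gibbs_expectation_even_moment_root_le[OF m_pos grad hess strong crit, of 4]
    by simp
qed

end
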